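(* Let $X_1,\dots,X_n$ be real-valued random variables and let $f_1,\dots,f_M$ be (entrywise) non-decreasing functions on $\mathbb R^n$. For each $j\in\{1,\dots,M\}$ let $Y_j=f_j(X_1,\dots,X_n)$. If $(X_1,\dots,X_n)\uparrow^{\mathrm{st}}Y_j$, then $(Y_1,\dots,Y_M)$ is PRDS on the subset $\{j\}$.
   Context: For vectors, $x\preceq y$ means $x_i\le y_i$ for all $i$; a function $f$ is non-decreasing if $x\preceq y$ implies $f(x)\le f(y)$. A random vector $X$ is stochastically increasing in a random variable $Y$, written $X\uparrow^{\mathrm{st}}Y$, if the regular conditional probability $\Pr(X\in\cdot\mid Y=y)$ exists and for every bounded non-decreasing function $g$, $y\mapsto\mathbb E[g(X)\mid Y=y]$ is non-decreasing. A set $D\subset\mathbb R^m$ is non-decreasing if $x\preceq y$, $x\in D$ imply $y\in D$. A random vector $Y\in\mathbb R^m$ is PRDS on $T\subset\{1,\dots,m\}$ if $t\mapsto\Pr(Y\in D\mid Y_i=t)$ is non-decreasing for every non-decreasing set $D$ and every $i\in T$. *)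

theory Defs
  imports "HOL-Probability.Probability"
begin

definition vle :: "real^'n \<Rightarrow> real^'n \<Rightarrow> bool" where
  "vle x y \<longleftrightarrow> (\<forall>i. x $ i \<le> y $ i)"

definition nondecr_fun :: "(real^'n \<Rightarrow> real) \<Rightarrow> bool" where
  "nondecr_fun g \<longleftrightarrow> (\<forall>x y. vle x y \<longrightarrow> g x \<le> g y)"

definition nondecr_set :: "(real^'n) set \<Rightarrow> bool" where
  "nondecr_set D \<longleftrightarrow> (\<forall>x y. vle x y \<longrightarrow> x \<in> D \<longrightarrow> y \<in> D)"

text \<open>kappa is a regular conditional distribution of X given Y (a Markov kernel
  disintegrating the joint law of (X,Y) against the law of Y).\<close>
definition is_rcd :: "'a measure \<Rightarrow> ('a \<Rightarrow> real^'n) \<Rightarrow> ('a \<Rightarrow> real)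
    \<Rightarrow> (real \<Rightarrow> (real^'n) measure) \<Rightarrow> bool" where
  "is_rcd M X Y \<kappa> \<longleftrightarrow>
     X \<in> borel_measurable M \<and> Y \<in> borel_measurable M \<and>
     (\<forall>y. prob_space (\<kappa> y) \<and> sets (\<kappa> y) = sets borel) \<and>
     (\<forall>A\<in>sets borel. (\<lambda>y. emeasure (\<kappa> y) A) \<in> borel_measurable borel) \<and>
     (\<forall>A\<in>sets borel. \<forall>B\<in>sets borel.
        emeasure M {\<omega>\<in>space M. X \<omega> \<in> A \<and> Y \<omega> \<in> B}
        = (\<integral>\<^sup>+ y. indicator B y * emeasure (\<kappa> y) A \<partial>(distr M borel Y)))"

definition stoch_incr :: "'a measure \<Rightarrow> ('a \<Rightarrow> real^'n) \<Rightarrow> ('a \<Rightarrow> real) \<Rightarrow> bool" where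
  "stoch_incr M X Y \<longleftrightarrow> (\<exists>\<kappa>. is_rcd M X Y \<kappa> \<and>
     (\<forall>g. g \<in> borel_measurable borel \<longrightarrow> bounded (range g) \<longrightarrow> nondecr_fun g \<longrightarrow>
        mono (\<lambda>y. \<integral>x. g x \<partial>(\<kappa> y))))"

definition PRDS :: "'a measure \<Rightarrow> ('a \<Rightarrow> real^'m) \<Rightarrow> 'm set \<Rightarrow> bool" where
  "PRDS M Y T \<longleftrightarrow> (\<forall>i\<in>T. \<exists>\<kappa>. is_rcd M Y (\<lambda>\<omega>. Y \<omega> $ i) \<kappa> \<and>
     (\<forall>D\<in>sets borel. nondecr_set D \<longrightarrow> mono (\<lambda>t. measure (\<kappa> t) D)))"

end

theory Submission
  imports Defs
begin

text \<open>Let \<open>F\<close> be the monotone map \<open>x \<mapsto> (f\<^sub>1 x, \<dots>, f\<^sub>M x)\<close>, so that \<open>Y = F X\<close> and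
  \<open>Y\<^sub>j = f\<^sub>j X\<close>. Pushing a regular conditional distribution of \<open>X\<close> given \<open>Y\<^sub>j\<close> forward
  along \<open>F\<close> gives one of \<open>Y\<close> given \<open>Y\<^sub>j\<close>. For a non-decreasing Borel set \<open>D\<close> the
  preimage \<open>F\<^sup>-\<^sup>1 D\<close> is again non-decreasing, so \<open>Pr(Y \<in> D | Y\<^sub>j = t)\<close> is the
  conditional expectation of the bounded non-decreasing function \<open>1\<^bsub>F\<^sup>-\<^sup>1 D\<^esub>(X)\<close>, which is
  non-decreasing in \<open>t\<close> because \<open>X\<close> is stochastically increasing in \<open>Y\<^sub>j\<close>.\<close>

lemma borel_measurable_vec_lambda:
  fixes f :: "'m::finite \<Rightarrow> 'a \<Rightarrow> real"
  assumes "\<And>k. f k \<in> borel_measurable M"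
  shows "(\<lambda>x. \<chi> k. f k x) \<in> borel_measurable M"
proof (rule borel_measurable_euclidean_space[THEN iffD2], intro ballI)
  fix b :: "real^'m" assume "b \<in> Basis"
  then obtain i where "b = axis i 1"
    by (auto simp: Basis_vec_def)
  then show "(\<lambda>x. (\<chi> k. f k x) \<bullet> b) \<in> borel_measurable M"
    by (simp add: inner_axis assms)
qed

lemma vle_vec_lambda_mono:
  assumes "\<And>k. nondecr_fun (f k)" and "vle x y"
  shows "vle (\<chi> k. f k x) (\<chi> k. f k y)"
  using assms by (simp add: vle_def nondecr_fun_def)

lemma nondecr_set_vimage:
  assumes "nondecr_set D" and "\<And>x y. vle x y \<Longrightarrow> vle (F x) (F y)"
  shows "nondecr_set (F -` D)"
  using assms unfolding nondecr_set_def by blast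

lemma nondecr_fun_indicator:
  assumes "nondecr_set D"
  shows "nondecr_fun (indicator D :: real^'n \<Rightarrow> real)"
  using assms unfolding nondecr_fun_def nondecr_set_def indicator_def by fastforce

lemma
  assumes sets_N: "sets N = sets borel" and F: "F \<in> borel_measurable borel" and A: "A \<in> sets borel"
  shows emeasure_distr_borel: "emeasure (distr N borel F) A = emeasure N (F -` A)"
    and measure_distr_borel: "measure (distr N borel F) A = measure N (F -` A)"
proof -
  have F_N: "F \<in> N \<rightarrow>\<^sub>M borel"
    using F measurable_cong_sets[OF sets_N refl] by blast
  have "space N = UNIV"
    using sets_eq_imp_space_eq[OF sets_N] by simp
  then show "emeasure (distr N borel F) A = emeasure N (F -` A)"
    and "measure (distr N borel F) A = measure N (F -` A)"
    using emeasure_distr[OF F_N A] measure_distr[OF F_N A] by simp_all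
qed

lemma is_rcd_distr:
  fixes F :: "real^'n \<Rightarrow> real^'m"
  assumes rcd: "is_rcd M X Y \<kappa>" and F: "F \<in> borel_measurable borel"
  shows "is_rcd M (\<lambda>\<omega>. F (X \<omega>)) Y (\<lambda>y. distr (\<kappa> y) borel F)"
proof -
  from rcd have X: "X \<in> borel_measurable M" and Y: "Y \<in> borel_measurable M"
    and prob_\<kappa>: "\<And>y. prob_space (\<kappa> y)" and sets_\<kappa>: "\<And>y. sets (\<kappa> y) = sets borel"
    and measurable_\<kappa>: "\<And>A. A \<in> sets borel \<Longrightarrow> (\<lambda>y. emeasure (\<kappa> y) A) \<in> borel_measurable borel"
    and disintegration: "\<And>A B. A \<in> sets borel \<Longrightarrow> B \<in> sets borel \<Longrightarrow>
        emeasure M {\<omega>\<in>space M. X \<omega> \<in> A \<and> Y \<omega> \<in> B}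
        = (\<integral>\<^sup>+ y. indicator B y * emeasure (\<kappa> y) A \<partial>distr M borel Y)"
    unfolding is_rcd_def by blast+
  have F_\<kappa>: "F \<in> \<kappa> y \<rightarrow>\<^sub>M borel" for y
    using F measurable_cong_sets[OF sets_\<kappa> refl] by blast
  have vimage_borel: "F -` A \<in> sets borel" if "A \<in> sets borel" for A
    using measurable_sets[OF F that] by simp
  note emeasure_pushforward = emeasure_distr_borel[OF sets_\<kappa> F]
  show ?thesis
    unfolding is_rcd_def
  proof (intro conjI allI ballI)
    show "(\<lambda>\<omega>. F (X \<omega>)) \<in> borel_measurable M"
      using X F by measurable
    show "prob_space (distr (\<kappa> y) borel F)" for y
      using prob_\<kappa> F_\<kappa> by (rule prob_space.prob_space_distr)
  next
    fix A :: "(real^'m) set" assume "A \<in> sets borel"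
    then show "(\<lambda>y. emeasure (distr (\<kappa> y) borel F) A) \<in> borel_measurable borel"
      unfolding emeasure_pushforward[OF \<open>A \<in> sets borel\<close>]
      by (intro measurable_\<kappa> vimage_borel)
  next
    fix A :: "(real^'m) set" and B :: "real set" assume "A \<in> sets borel" "B \<in> sets borel"
    then show "emeasure M {\<omega> \<in> space M. F (X \<omega>) \<in> A \<and> Y \<omega> \<in> B}
        = (\<integral>\<^sup>+ y. indicator B y * emeasure (distr (\<kappa> y) borel F) A \<partial>distr M borel Y)"
      using disintegration[OF vimage_borel] by (simp add: emeasure_pushforward)
  qed (simp_all add: Y)
qed

lemma mono_measure_nondecr_set:
  fixes D :: "(real^'n) set"
  assumes incr: "\<And>g. g \<in> borel_measurable borel \<Longrightarrow> bounded (range g) \<Longrightarrow> nondecr_fun g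
      \<Longrightarrow> mono (\<lambda>y. \<integral>x. g x \<partial>\<kappa> y)"
    and sets_\<kappa>: "\<And>y. sets (\<kappa> y) = sets borel"
    and D: "D \<in> sets borel" "nondecr_set D"
  shows "mono (\<lambda>y. measure (\<kappa> y) D)"
proof -
  have "(indicator D :: real^'n \<Rightarrow> real) \<in> borel_measurable borel"
    using D(1) by simp
  moreover have "bounded (range (indicator D :: real^'n \<Rightarrow> real))"
    by (rule bounded_subset[of "{0, 1}"]) (auto simp: indicator_def)
  ultimately have "mono (\<lambda>y. \<integral>x. (indicator D x :: real) \<partial>\<kappa> y)"
    using nondecr_fun_indicator[OF D(2)] by (rule incr)
  moreover have "space (\<kappa> y) = UNIV" for y
    using sets_eq_imp_space_eq[OF sets_\<kappa>] by simp
  ultimately show ?thesis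
    by simp
qed

theorem theorem3:
  fixes M :: "'a measure" and X :: "'a \<Rightarrow> real^'n"
    and f :: "'m::finite \<Rightarrow> real^'n \<Rightarrow> real" and j :: 'm
  assumes "prob_space M"
    and "X \<in> borel_measurable M"
    and "\<And>k. f k \<in> borel_measurable borel"
    and "\<And>k. nondecr_fun (f k)"
    and "stoch_incr M X (\<lambda>\<omega>. f j (X \<omega>))"
  shows "PRDS M (\<lambda>\<omega>. \<chi> k. f k (X \<omega>)) {j}"
proof -
  define F where "F x = (\<chi> k. f k x)" for x
  obtain \<kappa> where rcd: "is_rcd M X (\<lambda>\<omega>. f j (X \<omega>)) \<kappa>"
    and incr: "\<And>g. g \<in> borel_measurable borel \<Longrightarrow> bounded (range g) \<Longrightarrow> nondecr_fun g
        \<Longrightarrow> mono (\<lambda>y. \<integral>x. g x \<partial>\<kappa> y)"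
    using assms(5) unfolding stoch_incr_def by blast
  have sets_\<kappa>: "sets (\<kappa> y) = sets borel" for y
    using rcd unfolding is_rcd_def by blast
  have F: "F \<in> borel_measurable borel"
    unfolding F_def using assms(3) by (rule borel_measurable_vec_lambda)
  have "is_rcd M (\<lambda>\<omega>. F (X \<omega>)) (\<lambda>\<omega>. f j (X \<omega>)) (\<lambda>y. distr (\<kappa> y) borel F)"
    using rcd F by (rule is_rcd_distr)
  moreover have "mono (\<lambda>t. measure (distr (\<kappa> t) borel F) D)"
    if "D \<in> sets borel" "nondecr_set D" for D
  proof -
    have "F -` D \<in> sets borel"
      using measurable_sets[OF F that(1)] by simp
    moreover have "nondecr_set (F -` D)"
      using that(2) assms(4) unfolding F_def by (blast intro: nondecr_set_vimage vle_vec_lambda_mono)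
    ultimately have "mono (\<lambda>t. measure (\<kappa> t) (F -` D))"
      using mono_measure_nondecr_set[OF incr sets_\<kappa>] by blast
    then show ?thesis
      by (simp add: measure_distr_borel[OF sets_\<kappa> F that(1)])
  qed
  ultimately show ?thesis
    unfolding PRDS_def F_def by auto
qed

end
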